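(* Let $R$ be a right $\sigma$-reversible ring, where $\sigma$ is an endomorphism of $R$ with $\sigma(1)=1$. Then the set of idempotents of $R[[x;\sigma]]$ coincides with the set of idempotents of $R$ (viewed as constant series), and $R[[x;\sigma]]$ is abelian (all its idempotents are central).
   Context: All rings are associative with identity; $\sigma$ denotes a nonzero, non-identity ring endomorphism of $R$. The skew power series ring $R[[x;\sigma]]$ consists of all formal series $\sum_{i=0}^\infty a_i x^i$ with $a_i\in R$, added termwise and multiplied using distributivity and the rule $xa=\sigma(a)x$ for $a\in R$. $R$ is right $\sigma$-reversible if for all $a,b\in R$, $ab=0$ implies $b\sigma(a)=0$. *)

theory Defs
  imports "HOL-Computational_Algebra.Formal_Power_Series"
begin

text \<open>Ring endomorphism of a ring with identity (type class ring_1).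
  Preservation of 1 is NOT included; it is a separate hypothesis of the lemma.\<close>
definition ring_endo :: "('a::ring_1 \<Rightarrow> 'a) \<Rightarrow> bool" where
  "ring_endo \<sigma> \<longleftrightarrow> (\<forall>a b. \<sigma> (a + b) = \<sigma> a + \<sigma> b) \<and> (\<forall>a b. \<sigma> (a * b) = \<sigma> a * \<sigma> b)"

definition right_sigma_reversible :: "('a::ring_1 \<Rightarrow> 'a) \<Rightarrow> bool" where
  "right_sigma_reversible \<sigma> \<longleftrightarrow> (\<forall>a b. a * b = 0 \<longrightarrow> b * \<sigma> a = 0)"

text \<open>Multiplication in the skew power series ring R[[x;sigma]], with underlying
  series represented as formal power series (coefficient sequences):
  (sum a_i x^i)(sum b_j x^j) = sum_n (sum_{i+j=n} a_i sigma^i(b_j)) x^n,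
  since x a = sigma(a) x.  Addition is the usual termwise addition of fps.\<close>
definition skew_mult :: "('a::ring_1 \<Rightarrow> 'a) \<Rightarrow> 'a fps \<Rightarrow> 'a fps \<Rightarrow> 'a fps" where
  "skew_mult \<sigma> f g = Abs_fps (\<lambda>n. \<Sum>i\<le>n. fps_nth f i * (\<sigma> ^^ i) (fps_nth g (n - i)))"

end

theory Submission
  imports Defs
begin

(* Let sigma be a unital ring endomorphism of R with ab = 0 implying b sigma(a) = 0.
   1. For an idempotent c of R, applying reversibility to c(1-c) = 0, (1-c)c = 0
      and their products with an arbitrary r shows sigma(c) = c and that c is central.
   2. Multiplying by a constant series c is easy: (c * f)_n = c f_n and
      (f * c)_n = f_n sigma^n(c).  Hence constant idempotents are idempotent series,
      and a constant central sigma-fixed series commutes with every series.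
   3. If e is an idempotent series with constant term c, comparing the n-th
      coefficients of e e = e, by induction on n, gives e_n = c e_n + e_n c, which
      forces e_n = 0 for n > 0 because c is a central idempotent. *)

lemma skew_mult_nth:
  "fps_nth (skew_mult \<sigma> f g) n = (\<Sum>i\<le>n. fps_nth f i * (\<sigma> ^^ i) (fps_nth g (n - i)))"
  by (simp add: skew_mult_def)

lemma ring_endo_diff:
  assumes "ring_endo \<sigma>"
  shows "\<sigma> (a - b) = \<sigma> a - \<sigma> b"
proof -
  have "\<sigma> a = \<sigma> ((a - b) + b)" by simp
  also have "\<dots> = \<sigma> (a - b) + \<sigma> b" using assms unfolding ring_endo_def by blast
  finally show ?thesis by (simp add: algebra_simps)
qed

lemma ring_endo_zero: "ring_endo \<sigma> \<Longrightarrow> \<sigma> 0 = 0"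
  using ring_endo_diff[of \<sigma> 0 0] by simp

lemma funpow_fixpoint: "\<sigma> c = c \<Longrightarrow> (\<sigma> ^^ n) c = c"
  by (induction n) auto

lemma reversible_idempotent_fixed:
  fixes \<sigma> :: "'a::ring_1 \<Rightarrow> 'a" and c :: 'a
  assumes endo: "ring_endo \<sigma>" and unital: "\<sigma> 1 = 1"
    and rev: "right_sigma_reversible \<sigma>" and idem: "c * c = c"
  shows "\<sigma> c = c"
proof -
  have "c * (1 - c) = 0" using idem by (simp add: algebra_simps)
  then have "(1 - c) * \<sigma> c = 0" using rev by (simp add: right_sigma_reversible_def)
  then have left: "\<sigma> c = c * \<sigma> c" by (simp add: algebra_simps)
  have "(1 - c) * c = 0" using idem by (simp add: algebra_simps)
  then have "c * \<sigma> (1 - c) = 0" using rev by (simp add: right_sigma_reversible_def)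
  then have right: "c = c * \<sigma> c" using ring_endo_diff[OF endo] unital by (simp add: algebra_simps)
  show ?thesis using left right by simp
qed

lemma reversible_idempotent_central:
  fixes \<sigma> :: "'a::ring_1 \<Rightarrow> 'a" and c r :: 'a
  assumes endo: "ring_endo \<sigma>" and unital: "\<sigma> 1 = 1"
    and rev: "right_sigma_reversible \<sigma>" and idem: "c * c = c"
  shows "c * r = r * c"
proof -
  have fixed: "\<sigma> c = c" by (rule reversible_idempotent_fixed[OF assms])
  have "c * ((1 - c) * r) = 0" using idem by (simp add: algebra_simps mult.assoc[symmetric])
  then have "(1 - c) * r * \<sigma> c = 0" using rev by (simp add: right_sigma_reversible_def)
  then have rc: "r * c = c * r * c" using fixed by (simp add: algebra_simps)
  have "(1 - c) * (c * r) = 0" using idem by (simp add: algebra_simps mult.assoc[symmetric])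
  then have "c * r * \<sigma> (1 - c) = 0" using rev by (simp add: right_sigma_reversible_def)
  then have "c * r * (1 - c) = 0" using ring_endo_diff[OF endo] unital fixed by simp
  then have cr: "c * r = c * r * c" by (simp add: right_diff_distrib)
  show ?thesis using rc cr by simp
qed

lemma skew_mult_const_left_nth:
  "fps_nth (skew_mult \<sigma> (fps_const c) f) n = c * fps_nth f n"
proof -
  have "fps_nth (skew_mult \<sigma> (fps_const c) f) n
      = (\<Sum>i\<le>n. if i = 0 then c * fps_nth f n else 0)"
    unfolding skew_mult_nth by (rule sum.cong) auto
  then show ?thesis by simp
qed

lemma skew_mult_const_right_nth:
  assumes "ring_endo \<sigma>"
  shows "fps_nth (skew_mult \<sigma> f (fps_const c)) n = fps_nth f n * (\<sigma> ^^ n) c"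
proof -
  have zero: "(\<sigma> ^^ i) 0 = 0" for i
    by (rule funpow_fixpoint) (rule ring_endo_zero[OF assms])
  have "fps_nth (skew_mult \<sigma> f (fps_const c)) n
      = (\<Sum>i\<le>n. if i = n then fps_nth f n * (\<sigma> ^^ n) c else 0)"
    unfolding skew_mult_nth by (rule sum.cong) (auto simp: zero)
  then show ?thesis by simp
qed

lemma skew_mult_const_idempotent:
  "c * c = c \<Longrightarrow> skew_mult \<sigma> (fps_const c) (fps_const c) = fps_const c"
  by (rule fps_ext) (simp add: skew_mult_const_left_nth)

lemma skew_mult_const_commute:
  assumes "ring_endo \<sigma>" and "\<sigma> c = c" and "\<And>r. c * r = r * c"
  shows "skew_mult \<sigma> (fps_const c) f = skew_mult \<sigma> f (fps_const c)"
  by (rule fps_ext)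
    (simp add: skew_mult_const_left_nth skew_mult_const_right_nth[OF assms(1)]
      funpow_fixpoint[of \<sigma> c, OF assms(2)] assms(3))

(* Step 3, algebraic core: a = ca + ac with c a central idempotent forces a = 0,
   since then a = 2ca, hence ca = 2ca, so ca = 0 and a = 0. *)
lemma central_idempotent_absorb:
  fixes a c :: "'a::ring_1"
  assumes idem: "c * c = c" and comm: "c * a = a * c" and eq: "a = c * a + a * c"
  shows "a = 0"
proof -
  have a2: "a = c * a + c * a" using eq comm by simp
  then have "c * a = c * (c * a + c * a)" by simp
  also have "\<dots> = c * a + c * a" by (simp add: distrib_left mult.assoc[symmetric] idem)
  finally have "c * a = 0" by simp
  then show ?thesis using a2 by simp
qed

(* The coefficient identity for an idempotent series whose coefficients strictly
   between 0 and n vanish: only the terms i = 0 and i = n of (e e)_n survive. *)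
lemma idempotent_series_coeff:
  assumes idem: "skew_mult \<sigma> e e = e" and "0 < n"
    and gap: "\<And>m. 0 < m \<Longrightarrow> m < n \<Longrightarrow> fps_nth e m = 0"
  shows "fps_nth e n = fps_nth e 0 * fps_nth e n + fps_nth e n * (\<sigma> ^^ n) (fps_nth e 0)"
proof -
  have "fps_nth e n = (\<Sum>i\<le>n. fps_nth e i * (\<sigma> ^^ i) (fps_nth e (n - i)))"
    using arg_cong[OF idem, of "\<lambda>f. fps_nth f n"] by (simp add: skew_mult_nth)
  also have "\<dots> = (\<Sum>i\<le>n. (if i = 0 then fps_nth e 0 * fps_nth e n else 0)
                         + (if i = n then fps_nth e n * (\<sigma> ^^ n) (fps_nth e 0) else 0))"
    using \<open>0 < n\<close> gap by (intro sum.cong) auto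
  also have "\<dots> = fps_nth e 0 * fps_nth e n + fps_nth e n * (\<sigma> ^^ n) (fps_nth e 0)"
    by (simp add: sum.distrib)
  finally show ?thesis .
qed

lemma reversible_idempotent_series_const:
  fixes \<sigma> :: "'a::ring_1 \<Rightarrow> 'a"
  assumes endo: "ring_endo \<sigma>" and unital: "\<sigma> 1 = 1"
    and rev: "right_sigma_reversible \<sigma>" and idem: "skew_mult \<sigma> e e = e"
  shows "fps_nth e 0 * fps_nth e 0 = fps_nth e 0" and "e = fps_const (fps_nth e 0)"
proof -
  define c where "c = fps_nth e 0"
  show c_idem: "fps_nth e 0 * fps_nth e 0 = fps_nth e 0"
    using arg_cong[OF idem, of "\<lambda>f. fps_nth f 0"] by (simp add: skew_mult_nth)
  have fixed: "\<sigma> c = c" and central: "\<And>r. c * r = r * c"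
    using reversible_idempotent_fixed[OF endo unital rev c_idem]
      reversible_idempotent_central[OF endo unital rev c_idem] by (simp_all add: c_def)
  have "fps_nth e n = 0" if "0 < n" for n
    using that
  proof (induction n rule: less_induct)
    case (less n)
    have gap: "fps_nth e m = 0" if "0 < m" "m < n" for m
      using less.IH that by blast
    have "(\<sigma> ^^ n) c = c" by (rule funpow_fixpoint[of \<sigma> c, OF fixed])
    then have "fps_nth e n = c * fps_nth e n + fps_nth e n * c"
      using idempotent_series_coeff[OF idem less.prems gap] unfolding c_def by metis
    then show ?case
      by (rule central_idempotent_absorb[OF c_idem[folded c_def] central, rotated])
  qed
  then show "e = fps_const (fps_nth e 0)"
    by (intro fps_ext) (auto simp: gr0_conv_Suc)
qed

theorem lemma3p2:
  fixes \<sigma> :: "'a::ring_1 \<Rightarrow> 'a"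
  assumes "ring_endo \<sigma>"
    and "\<sigma> \<noteq> (\<lambda>_. 0)"
    and "\<sigma> \<noteq> id"
    and "\<sigma> 1 = 1"
    and "right_sigma_reversible \<sigma>"
  shows "{e. skew_mult \<sigma> e e = e} = fps_const ` {c. c * c = c}
    \<and> (\<forall>e. skew_mult \<sigma> e e = e \<longrightarrow> (\<forall>f. skew_mult \<sigma> e f = skew_mult \<sigma> f e))"
proof -
  note const = reversible_idempotent_series_const[OF assms(1,4,5)]
  have idempotents: "{e. skew_mult \<sigma> e e = e} = fps_const ` {c. c * c = c}"
  proof
    show "{e. skew_mult \<sigma> e e = e} \<subseteq> fps_const ` {c. c * c = c}"
      using const by blast
    show "fps_const ` {c. c * c = c} \<subseteq> {e. skew_mult \<sigma> e e = e}"
      using skew_mult_const_idempotent by blast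
  qed
  have "skew_mult \<sigma> e f = skew_mult \<sigma> f e" if idem: "skew_mult \<sigma> e e = e" for e f
  proof -
    have c_idem: "fps_nth e 0 * fps_nth e 0 = fps_nth e 0" using const(1)[OF idem] .
    have "skew_mult \<sigma> (fps_const (fps_nth e 0)) f = skew_mult \<sigma> f (fps_const (fps_nth e 0))"
      using skew_mult_const_commute[OF assms(1)]
        reversible_idempotent_fixed[OF assms(1,4,5) c_idem]
        reversible_idempotent_central[OF assms(1,4,5) c_idem] by blast
    then show ?thesis using const(2)[OF idem] by simp
  qed
  with idempotents show ?thesis by blast
qed

end
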